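(* Fix $t>0$, $\alpha\in(0,1/2)$ and $\beta>e^2t^{1/(d+1)}$. Then there are finite positive constants $\theta_0,C_1,C_2$ such that for every $\theta\ge\theta_0$, $$P\{\exists\, y<x \text{ in }\mathbb R^d:\ |y|_\infty\ge\theta,\ |x-y|_\infty\ge\alpha|y|_\infty,\ \mathbf H((y,0),(x,t))\ge\beta|x-y|_\infty^{d/(d+1)}\}\le C_1\exp(-C_2\theta^{d/(d+1)}).$$
   Context: Order: for $x,y\in\mathbb R^\nu$, $x<y$ iff $x_i<y_i$ for all $i$; $|x|_\infty=\max_i|x_i|$; $d\ge2$. A rate-one homogeneous Poisson point process on $\mathbb R^d\times(0,\infty)$ is given with law $P$. For $y\le x$ in $\mathbb R^d$ and $t>0$, $\mathbf H((y,0),(x,t))$ is the maximal $m\ge0$ such that there are Poisson points $p^1<\dots<p^m$ (strict coordinatewise order in $\mathbb R^{d+1}$) all in $\{(\eta,s):y<\eta\le x,\ 0<s\le t\}$. *)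

theory Defs
  imports "HOL-Probability.Probability"
begin

definition sup_norm :: "real ^ 'd::finite \<Rightarrow> real" where
  "sup_norm x = Max (range (\<lambda>i. \<bar>x $ i\<bar>))"

definition sp_less :: "real ^ 'd::finite \<Rightarrow> real ^ 'd \<Rightarrow> bool" where
  "sp_less x y \<longleftrightarrow> (\<forall>i. x $ i < y $ i)"

definition st_less :: "(real ^ 'd::finite) \<times> real \<Rightarrow> (real ^ 'd) \<times> real \<Rightarrow> bool" where
  "st_less p q \<longleftrightarrow> sp_less (fst p) (fst q) \<and> snd p < snd q"

text \<open>Rate-one homogeneous Poisson point process on R^d x (0,infinity), realised as a
  random locally finite point set Xi on the probability space M.\<close>
definition poisson_process ::
  "'w measure \<Rightarrow> ('w \<Rightarrow> ((real ^ 'd::finite) \<times> real) set) \<Rightarrow> bool" where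
  "poisson_process M Xi \<longleftrightarrow>
     prob_space M \<and>
     (\<forall>\<omega>\<in>space M. Xi \<omega> \<subseteq> UNIV \<times> {0<..}) \<and>
     (\<forall>A. A \<in> sets borel \<and> bounded A \<and> A \<subseteq> UNIV \<times> {0<..} \<longrightarrow>
        (\<forall>\<omega>\<in>space M. finite (Xi \<omega> \<inter> A)) \<and>
        (\<forall>k::nat. {\<omega>\<in>space M. card (Xi \<omega> \<inter> A) = k} \<in> sets M \<and>
            measure M {\<omega>\<in>space M. card (Xi \<omega> \<inter> A) = k}
              = measure lborel A ^ k / fact k * exp (- measure lborel A))) \<and>
     (\<forall>(I::nat set) A. finite I \<and> disjoint_family_on A I \<and>
        (\<forall>i\<in>I. A i \<in> sets borel \<and> bounded (A i) \<and> A i \<subseteq> UNIV \<times> {0<..}) \<longrightarrow>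
        prob_space.indep_vars M (\<lambda>_. count_space UNIV)
          (\<lambda>i \<omega>. card (Xi \<omega> \<inter> A i)) I)"

text \<open>Last-passage value H((y,0),(x,t)): maximal length of a strictly increasing chain
  of Poisson points in {(eta,s). y < eta <= x, 0 < s <= t}.\<close>
definition Hpass ::
  "((real ^ 'd::finite) \<times> real) set \<Rightarrow> real ^ 'd \<Rightarrow> real ^ 'd \<Rightarrow> real \<Rightarrow> nat" where
  "Hpass P y x t = Max {length ps | ps. sorted_wrt st_less ps \<and>
      set ps \<subseteq> P \<inter> {(\<eta>, s). sp_less y \<eta> \<and> \<eta> \<le> x \<and> 0 < s \<and> s \<le> t}}"

end

theory Submission
  imports Defs "HOL-Library.Cardinality" "HOL-Real_Asymp.Real_Asymp"
begin

(* Let n = floor |x - y| and cover (y, x] x (0, t] by the box with corner (floor y, 0), spatial side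
   n + 2 and height t. Cut a box of side s into k^(d+1) cells of size (s/k)^d (t/k). An increasing
   chain of k Poisson points visits a sequence of cells that is non-decreasing in each of the d + 1
   coordinates; there are at most 4^(k(d+1)) such sequences, and by independence and the Poisson tail
   P(N >= m) <= lambda^m the cells are occupied as often as visited with probability at most
   (s^d t / k^(d+1))^k. For k = ceil(beta n^(d/(d+1))) this is at most q^k, where q is close to
   4^(d+1) t / beta^(d+1), which is < 1 because 4 < e^2. Since |y| <= |x - y| / alpha, only O(n^d)
   corners occur at level n, and the levels n >= alpha theta - 1 sum to O(exp(-C theta^(d/(d+1)))). *)

section \<open>Outer probability bounds\<close>

text \<open>The events of the theorem are not known to be measurable, so they are bounded through
  measurable supersets.\<close>

definition outer_measure_le :: "'a measure \<Rightarrow> 'a set \<Rightarrow> real \<Rightarrow> bool" where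
  "outer_measure_le M S p \<longleftrightarrow> (\<exists>E\<in>sets M. S \<subseteq> E \<and> measure M E \<le> p)"

lemma outer_measure_leI: "E \<in> sets M \<Longrightarrow> S \<subseteq> E \<Longrightarrow> measure M E \<le> p \<Longrightarrow> outer_measure_le M S p"
  unfolding outer_measure_le_def by blast

lemma outer_measure_le_mono:
  "outer_measure_le M S p \<Longrightarrow> S' \<subseteq> S \<Longrightarrow> p \<le> p' \<Longrightarrow> outer_measure_le M S' p'"
  unfolding outer_measure_le_def by (meson order_trans)

lemma outer_measure_le_empty: "0 \<le> p \<Longrightarrow> outer_measure_le M {} p"
  by (rule outer_measure_leI[of "{}"]) auto

context finite_measure
begin

lemma outer_measure_le_finite_UN:
  assumes "finite I" and "\<And>i. i \<in> I \<Longrightarrow> outer_measure_le M (S i) (b i)"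
  shows "outer_measure_le M (\<Union>i\<in>I. S i) (\<Sum>i\<in>I. b i)"
proof -
  obtain F where F: "\<And>i. i \<in> I \<Longrightarrow> F i \<in> sets M \<and> S i \<subseteq> F i \<and> measure M (F i) \<le> b i"
    using assms(2) unfolding outer_measure_le_def by metis
  have "measure M (\<Union>i\<in>I. F i) \<le> (\<Sum>i\<in>I. measure M (F i))"
    using F by (intro finite_measure_subadditive_finite assms(1)) auto
  also have "\<dots> \<le> (\<Sum>i\<in>I. b i)"
    using F by (intro sum_mono) auto
  finally show ?thesis
    using F assms(1) by (intro outer_measure_leI[of "\<Union>i\<in>I. F i"]) auto
qed

lemma outer_measure_le_countable_UN:
  fixes S :: "nat \<Rightarrow> 'a set"
  assumes "\<And>n. outer_measure_le M (S n) (b n)" and "summable b"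
  shows "outer_measure_le M (\<Union>n. S n) (\<Sum>n. b n)"
proof -
  obtain F where F: "\<And>n. F n \<in> sets M \<and> S n \<subseteq> F n \<and> measure M (F n) \<le> b n"
    using assms(1) unfolding outer_measure_le_def by metis
  have summable_F: "summable (\<lambda>n. measure M (F n))"
    using F by (intro summable_comparison_test'[OF assms(2)]) auto
  have "measure M (\<Union>n. F n) \<le> (\<Sum>n. measure M (F n))"
    using F summable_F by (intro finite_measure_subadditive_countably) auto
  also have "\<dots> \<le> (\<Sum>n. b n)"
    using F summable_F assms(2) by (intro suminf_le) auto
  finally show ?thesis
    using F by (intro outer_measure_leI[of "\<Union>n. F n"]) auto
qed

end

section \<open>Poisson counts\<close>

definition admissible_region :: "((real ^ 'd::finite) \<times> real) set \<Rightarrow> bool" where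
  "admissible_region A \<longleftrightarrow> A \<in> sets borel \<and> bounded A \<and> A \<subseteq> UNIV \<times> {0<..}"

lemma poisson_process_prob_space: "poisson_process M Xi \<Longrightarrow> prob_space M"
  by (simp add: poisson_process_def)

lemma poisson_process_finite:
  "poisson_process M Xi \<Longrightarrow> admissible_region A \<Longrightarrow> \<omega> \<in> space M \<Longrightarrow> finite (Xi \<omega> \<inter> A)"
  by (simp add: poisson_process_def admissible_region_def)

lemma poisson_process_count_eq:
  assumes "poisson_process M Xi" and "admissible_region A"
  shows "{\<omega>\<in>space M. card (Xi \<omega> \<inter> A) = k} \<in> sets M"
    and "measure M {\<omega>\<in>space M. card (Xi \<omega> \<inter> A) = k}
           = measure lborel A ^ k / fact k * exp (- measure lborel A)"
  using assms unfolding poisson_process_def admissible_region_def by blast+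

lemma poisson_tail_le_power:
  fixes v :: real
  assumes "v \<ge> 0"
  shows "1 - (\<Sum>j<m. v ^ j / fact j * exp (- v)) \<le> v ^ m"
proof -
  obtain s where s: "\<bar>s\<bar> \<le> \<bar>v\<bar>" "exp v = (\<Sum>j<m. v ^ j / fact j) + exp s / fact m * v ^ m"
    using Maclaurin_exp_le by blast
  have "1 = exp v * exp (- v)"
    by (simp add: exp_minus_inverse)
  also have "\<dots> = (\<Sum>j<m. v ^ j / fact j * exp (- v)) + exp (s - v) / fact m * v ^ m"
    by (simp add: s(2) algebra_simps sum_distrib_right exp_diff exp_minus divide_inverse)
  finally have "1 - (\<Sum>j<m. v ^ j / fact j * exp (- v)) = exp (s - v) / fact m * v ^ m"
    by simp
  also have "\<dots> \<le> v ^ m"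
  proof -
    have "exp (s - v) \<le> 1"
      using s(1) assms by simp
    also have "1 \<le> (fact m :: real)"
      by simp
    finally have "exp (s - v) / fact m \<le> 1"
      by simp
    then show ?thesis
      using assms by (intro mult_left_le_one_le) auto
  qed
  finally show ?thesis .
qed

lemma poisson_process_count_ge:
  assumes pp: "poisson_process M Xi" and A: "admissible_region A"
  shows "{\<omega>\<in>space M. m \<le> card (Xi \<omega> \<inter> A)} \<in> sets M"
    and "measure M {\<omega>\<in>space M. m \<le> card (Xi \<omega> \<inter> A)} \<le> measure lborel A ^ m"
proof -
  interpret prob_space M
    using pp by (rule poisson_process_prob_space)
  define E where "E j = {\<omega>\<in>space M. card (Xi \<omega> \<inter> A) = j}" for j
  have E: "E j \<in> sets M" for j
    unfolding E_def by (rule poisson_process_count_eq(1)[OF pp A])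
  have eq: "{\<omega>\<in>space M. m \<le> card (Xi \<omega> \<inter> A)} = space M - (\<Union>j<m. E j)"
    by (auto simp: E_def)
  show "{\<omega>\<in>space M. m \<le> card (Xi \<omega> \<inter> A)} \<in> sets M"
    unfolding eq using E by auto
  have "prob (\<Union>j<m. E j) = (\<Sum>j<m. prob (E j))"
    using E by (intro finite_measure_finite_Union) (auto simp: disjoint_family_on_def E_def)
  also have "\<dots> = (\<Sum>j<m. measure lborel A ^ j / fact j * exp (- measure lborel A))"
    unfolding E_def using poisson_process_count_eq(2)[OF pp A] by simp
  finally have "prob (space M - (\<Union>j<m. E j))
      = 1 - (\<Sum>j<m. measure lborel A ^ j / fact j * exp (- measure lborel A))"
    using E by (subst prob_compl) auto
  also have "\<dots> \<le> measure lborel A ^ m"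
    by (rule poisson_tail_le_power) simp
  finally show "measure M {\<omega>\<in>space M. m \<le> card (Xi \<omega> \<inter> A)} \<le> measure lborel A ^ m"
    unfolding eq .
qed

lemma poisson_process_count_ge_indep:
  assumes pp: "poisson_process M Xi" and "finite S"
    and A: "\<And>s. s \<in> S \<Longrightarrow> admissible_region (A s)" and disj: "disjoint_family_on A S"
  shows "measure M {\<omega>\<in>space M. \<forall>s\<in>S. m s \<le> card (Xi \<omega> \<inter> A s)}
           = (\<Prod>s\<in>S. measure M {\<omega>\<in>space M. m s \<le> card (Xi \<omega> \<inter> A s)})"
proof (cases "S = {}")
  case True
  then show ?thesis
    using poisson_process_prob_space[OF pp] by (simp add: prob_space.prob_space)
next
  case False
  interpret prob_space M
    using pp by (rule poisson_process_prob_space)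
  define E where "E s = {\<omega>\<in>space M. m s \<le> card (Xi \<omega> \<inter> A s)}" for s
  obtain h where h: "bij_betw h {0..<card S} S"
    using ex_bij_betw_nat_finite[OF \<open>finite S\<close>] by blast
  then have h_inj: "inj_on h {0..<card S}" and h_img: "h ` {0..<card S} = S"
    by (auto simp: bij_betw_def)
  have "disjoint_family_on (\<lambda>i. A (h i)) {0..<card S}"
    using disj h_inj h_img unfolding disjoint_family_on_def by (metis image_eqI inj_on_eq_iff)
  moreover have "\<forall>i\<in>{0..<card S}. A (h i) \<in> sets borel \<and> bounded (A (h i)) \<and> A (h i) \<subseteq> UNIV \<times> {0<..}"
    using A h_img unfolding admissible_region_def by blast
  ultimately have "indep_vars (\<lambda>_. count_space UNIV) (\<lambda>i \<omega>. card (Xi \<omega> \<inter> A (h i))) {0..<card S}"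
    using pp unfolding poisson_process_def by blast
  then have "indep_sets (\<lambda>i. {(\<lambda>\<omega>. card (Xi \<omega> \<inter> A (h i))) -` B \<inter> space M | B. B \<in> sets (count_space UNIV)})
      {0..<card S}"
    by (simp add: indep_vars_def2)
  moreover have "E (h i) \<in> {(\<lambda>\<omega>. card (Xi \<omega> \<inter> A (h i))) -` B \<inter> space M | B. B \<in> sets (count_space UNIV)}"
    for i
    unfolding E_def by (rule CollectI, rule exI[of _ "{m (h i)..}"]) auto
  ultimately have "prob (\<Inter>i\<in>{0..<card S}. E (h i)) = (\<Prod>i\<in>{0..<card S}. prob (E (h i)))"
    using False \<open>finite S\<close> by (intro indep_setsD) auto
  moreover have "(\<Inter>i\<in>{0..<card S}. E (h i)) = (\<Inter>s\<in>S. E s)"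
    using image_image[of E h "{0..<card S}"] h_img by simp
  moreover have "(\<Inter>s\<in>S. E s) = {\<omega>\<in>space M. \<forall>s\<in>S. m s \<le> card (Xi \<omega> \<inter> A s)}"
    using False by (auto simp: E_def)
  ultimately show ?thesis
    using prod.reindex_bij_betw[OF h] by (simp add: E_def)
qed

section \<open>Space-time bricks and grid cells\<close>

definition brick :: "real ^ 'd::finite \<Rightarrow> real ^ 'd \<Rightarrow> real \<Rightarrow> real \<Rightarrow> ((real ^ 'd) \<times> real) set" where
  "brick l u l0 u0 = {p. (\<forall>i. l $ i < fst p $ i \<and> fst p $ i \<le> u $ i) \<and> l0 < snd p \<and> snd p \<le> u0}"

definition st_cube :: "real ^ 'd::finite \<Rightarrow> real \<Rightarrow> real \<Rightarrow> ((real ^ 'd) \<times> real) set" where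
  "st_cube a s t = brick a (\<chi> i. a $ i + s) 0 t"

lemma brick_borel: "brick (l :: real ^ 'd::finite) u l0 u0 \<in> sets borel"
proof -
  have [measurable]: "(\<lambda>p::(real ^ 'd) \<times> real. fst p $ i) \<in> borel_measurable borel"
    "(\<lambda>p::(real ^ 'd) \<times> real. snd p) \<in> borel_measurable borel" for i
    by (intro borel_measurable_continuous_onI continuous_intros)+
  show ?thesis
    unfolding brick_def by measurable
qed

lemma brick_subset_cbox: "brick l u l0 u0 \<subseteq> cbox (l, l0) (u, u0)"
  by (auto simp: brick_def cbox_Pair_eq mem_box_cart less_imp_le)

lemma admissible_region_brick:
  assumes "0 \<le> l0"
  shows "admissible_region (brick l u l0 u0)"
proof -
  have "bounded (brick l u l0 u0)"
    by (rule bounded_subset[OF bounded_cbox brick_subset_cbox])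
  then show ?thesis
    using brick_borel assms by (auto simp: admissible_region_def brick_def)
qed

lemma measure_brick_le:
  assumes "\<And>i. l $ i \<le> u $ i" and "l0 \<le> u0"
  shows "measure lborel (brick l u l0 u0) \<le> (\<Prod>i\<in>UNIV. u $ i - l $ i) * (u0 - l0)"
proof -
  have "measure lborel (brick l u l0 u0) \<le> measure lborel (cbox (l, l0) (u, u0))"
    by (rule measure_mono_fmeasurable[OF brick_subset_cbox]) (use brick_borel in auto)
  also have "\<dots> = measure lborel (cbox l u) * measure lborel (cbox l0 u0)"
    by (rule content_Pair)
  also have "\<dots> = (\<Prod>i\<in>UNIV. u $ i - l $ i) * (u0 - l0)"
  proof -
    have "l \<in> cbox l u"
      using assms by (simp add: mem_box_cart)
    then show ?thesis
      using assms by (subst content_cbox_cart) auto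
  qed
  finally show ?thesis .
qed

definition grid_index :: "real \<Rightarrow> real \<Rightarrow> nat" where
  "grid_index h z = nat (\<lceil>z / h\<rceil> - 1)"

lemma grid_index_bounds:
  assumes "h > 0" and "z > 0"
  shows "real (grid_index h z) * h < z" and "z \<le> (real (grid_index h z) + 1) * h"
proof -
  have "0 < \<lceil>z / h\<rceil>"
    using assms by simp
  then have "real (grid_index h z) = real_of_int \<lceil>z / h\<rceil> - 1"
    by (simp add: grid_index_def)
  then have "real (grid_index h z) < z / h" and "z / h \<le> real (grid_index h z) + 1"
    by linarith+
  then show "real (grid_index h z) * h < z" and "z \<le> (real (grid_index h z) + 1) * h"
    using assms by (simp_all add: pos_less_divide_eq pos_divide_le_eq)
qed

lemma grid_index_eqI:
  assumes "h > 0" and "real j * h < z" and "z \<le> (real j + 1) * h"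
  shows "grid_index h z = j"
proof -
  have "real j < z / h" and "z / h \<le> real j + 1"
    using assms by (simp_all add: field_simps)
  then have "\<lceil>z / h\<rceil> = int j + 1"
    by (simp add: ceiling_eq_iff)
  then show ?thesis
    by (simp add: grid_index_def)
qed

lemma grid_index_less:
  assumes "h > 0" and "z > 0" and "z \<le> real k * h"
  shows "grid_index h z < k"
proof -
  have "real (grid_index h z) * h < real k * h"
    using grid_index_bounds(1)[OF assms(1,2)] assms(3) by linarith
  then show ?thesis
    using assms(1) by simp
qed

lemma grid_index_mono:
  assumes "h > 0" and "z \<le> z'"
  shows "grid_index h z \<le> grid_index h z'"
  unfolding grid_index_def using assms by (intro nat_mono diff_right_mono ceiling_mono divide_right_mono) auto

text \<open>The time axis is the extra coordinate \<open>None\<close> of a cell index \<open>'d option \<Rightarrow> nat\<close>.\<close>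

definition cell_index :: "real ^ 'd::finite \<Rightarrow> real \<Rightarrow> real \<Rightarrow> (real ^ 'd) \<times> real \<Rightarrow> 'd option \<Rightarrow> nat" where
  "cell_index a h \<tau> p r =
     (case r of Some i \<Rightarrow> grid_index h (fst p $ i - a $ i) | None \<Rightarrow> grid_index \<tau> (snd p))"

definition cell :: "real ^ 'd::finite \<Rightarrow> real \<Rightarrow> real \<Rightarrow> ('d option \<Rightarrow> nat) \<Rightarrow> ((real ^ 'd) \<times> real) set" where
  "cell a h \<tau> c = brick (\<chi> i. a $ i + real (c (Some i)) * h) (\<chi> i. a $ i + (real (c (Some i)) + 1) * h)
     (real (c None) * \<tau>) ((real (c None) + 1) * \<tau>)"

lemma mem_cell_iff:
  "p \<in> cell a h \<tau> c \<longleftrightarrow>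
     (\<forall>i. real (c (Some i)) * h < fst p $ i - a $ i \<and> fst p $ i - a $ i \<le> (real (c (Some i)) + 1) * h) \<and>
     real (c None) * \<tau> < snd p \<and> snd p \<le> (real (c None) + 1) * \<tau>"
  unfolding cell_def brick_def by (simp add: algebra_simps)

lemma cell_index_eqI:
  assumes "h > 0" and "\<tau> > 0" and "p \<in> cell a h \<tau> c"
  shows "cell_index a h \<tau> p = c"
proof
  fix r
  show "cell_index a h \<tau> p r = c r"
    using assms by (cases r) (auto simp: cell_index_def mem_cell_iff intro: grid_index_eqI)
qed

lemma disjoint_family_cell:
  assumes "h > 0" and "\<tau> > 0"
  shows "disjoint_family_on (cell a h \<tau>) S"
  unfolding disjoint_family_on_def using cell_index_eqI[OF assms] by blast

lemma mem_cell_cell_index: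
  assumes "h > 0" and "\<tau> > 0" and "\<And>i. a $ i < fst p $ i" and "0 < snd p"
  shows "p \<in> cell a h \<tau> (cell_index a h \<tau> p)"
  unfolding mem_cell_iff cell_index_def
  using assms grid_index_bounds[OF assms(1)] grid_index_bounds[OF assms(2)] by simp

lemma cell_index_less:
  assumes "h > 0" and "\<tau> > 0" and "p \<in> st_cube a (real k * h) (real k * \<tau>)"
  shows "cell_index a h \<tau> p r < k"
proof (cases r)
  case None
  then show ?thesis
    using assms by (auto simp: cell_index_def st_cube_def brick_def intro: grid_index_less)
next
  case (Some i)
  have "a $ i < fst p $ i" and "fst p $ i \<le> a $ i + real k * h"
    using assms(3) by (auto simp: st_cube_def brick_def)
  then show ?thesis
    using Some assms(1) by (simp add: cell_index_def grid_index_less)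
qed

lemma cell_index_mono:
  assumes "h > 0" and "\<tau> > 0" and "st_less p q"
  shows "cell_index a h \<tau> p r \<le> cell_index a h \<tau> q r"
  using assms
  by (cases r) (auto simp: cell_index_def st_less_def sp_less_def less_imp_le intro: grid_index_mono)

lemma admissible_region_cell: "\<tau> \<ge> 0 \<Longrightarrow> admissible_region (cell a h \<tau> c)"
  unfolding cell_def by (rule admissible_region_brick) simp

lemma measure_cell_le:
  fixes a :: "real ^ 'd::finite"
  assumes "h > 0" and "\<tau> > 0"
  shows "measure lborel (cell a h \<tau> c) \<le> h ^ CARD('d) * \<tau>"
proof -
  have "measure lborel (cell a h \<tau> c) \<le> (\<Prod>i\<in>(UNIV :: 'd set). h) * \<tau>"
    unfolding cell_def by (rule order_trans[OF measure_brick_le]) (use assms in \<open>auto simp: algebra_simps\<close>)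
  then show ?thesis
    by simp
qed

section \<open>Monotone sequences of cell indices\<close>

definition sorted_index_lists :: "nat \<Rightarrow> nat list set" where
  "sorted_index_lists k = {xs. length xs = k \<and> set xs \<subseteq> {..<k} \<and> sorted xs}"

lemma finite_sorted_index_lists: "finite (sorted_index_lists k)"
  unfolding sorted_index_lists_def
  by (rule finite_subset[OF _ finite_lists_length_eq[OF finite_lessThan[of k], of k]]) auto

lemma card_sorted_index_lists_le: "card (sorted_index_lists k) \<le> 4 ^ k"
proof -
  have "inj_on mset (sorted_index_lists k)"
  proof (rule inj_onI)
    fix xs ys assume "xs \<in> sorted_index_lists k" "ys \<in> sorted_index_lists k" "mset xs = mset ys"
    then have "sort ys = xs"
      by (intro properties_for_sort) (auto simp: sorted_index_lists_def)
    then show "xs = ys"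
      using \<open>ys \<in> sorted_index_lists k\<close> by (simp add: sorted_index_lists_def sorted_sort_id)
  qed
  then have "card (sorted_index_lists k) = card (mset ` sorted_index_lists k)"
    by (simp add: card_image)
  also have "\<dots> \<le> card (multisets_of_size {..<k} k)"
    by (intro card_mono finite_multisets_of_size) (auto simp: sorted_index_lists_def multisets_of_size_def)
  also have "\<dots> = (k + k - 1) choose k"
    by (simp add: card_multisets_of_size)
  also have "\<dots> \<le> 2 ^ (2 * k)"
    by (rule order_trans[OF binomial_le_pow2 power_increasing]) auto
  also have "\<dots> = 4 ^ k"
    by (simp add: power_mult)
  finally show ?thesis .
qed

definition mono_index_seqs :: "nat \<Rightarrow> ('r \<Rightarrow> nat) list set" where
  "mono_index_seqs k = {cs. \<forall>r. map (\<lambda>c. c r) cs \<in> sorted_index_lists k}"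

lemma length_mono_index_seqs: "cs \<in> mono_index_seqs k \<Longrightarrow> length cs = k"
  by (simp add: mono_index_seqs_def sorted_index_lists_def)

lemma
  shows finite_mono_index_seqs: "finite (mono_index_seqs k :: ('r::finite \<Rightarrow> nat) list set)"
    and card_mono_index_seqs_le: "card (mono_index_seqs k :: ('r::finite \<Rightarrow> nat) list set) \<le> 4 ^ (k * CARD('r))"
proof -
  define T where "T cs = (\<lambda>r. map (\<lambda>c. c r) cs)" for cs :: "('r \<Rightarrow> nat) list"
  have inj: "inj_on T (mono_index_seqs k)"
  proof (rule inj_onI)
    fix cs ds assume cs: "cs \<in> mono_index_seqs k" and ds: "ds \<in> mono_index_seqs k" and eq: "T cs = T ds"
    have len: "length cs = length ds"
      using cs ds by (simp add: length_mono_index_seqs)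
    show "cs = ds"
    proof (rule nth_equalityI[OF len])
      fix j assume j: "j < length cs"
      have "(cs ! j) r = (ds ! j) r" for r
        using fun_cong[OF eq, of r] j len unfolding T_def by (metis nth_map)
      then show "cs ! j = ds ! j" ..
    qed
  qed
  have image: "T ` mono_index_seqs k \<subseteq> UNIV \<rightarrow>\<^sub>E sorted_index_lists k"
    by (auto simp: T_def mono_index_seqs_def)
  have finite_PiE: "finite (UNIV \<rightarrow>\<^sub>E sorted_index_lists k :: ('r \<Rightarrow> nat list) set)"
    by (simp add: finite_PiE finite_sorted_index_lists)
  then show "finite (mono_index_seqs k :: ('r \<Rightarrow> nat) list set)"
    using inj image finite_imageD finite_subset by blast
  have "card (mono_index_seqs k :: ('r \<Rightarrow> nat) list set) = card (T ` mono_index_seqs k)"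
    using inj by (rule card_image[symmetric])
  also have "\<dots> \<le> card (UNIV \<rightarrow>\<^sub>E sorted_index_lists k :: ('r \<Rightarrow> nat list) set)"
    using finite_PiE image by (rule card_mono)
  also have "\<dots> = card (sorted_index_lists k) ^ CARD('r)"
    by (simp add: card_PiE)
  also have "\<dots> \<le> 4 ^ (k * CARD('r))"
    by (simp add: power_mult power_mono card_sorted_index_lists_le)
  finally show "card (mono_index_seqs k :: ('r \<Rightarrow> nat) list set) \<le> 4 ^ (k * CARD('r))" .
qed

section \<open>Increasing chains of Poisson points\<close>

definition has_chain :: "((real ^ 'd::finite) \<times> real) set \<Rightarrow> nat \<Rightarrow> bool" where
  "has_chain P k \<longleftrightarrow> (\<exists>ps. length ps = k \<and> sorted_wrt st_less ps \<and> set ps \<subseteq> P)"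

lemma has_chain_mono: "has_chain P k \<Longrightarrow> P \<subseteq> Q \<Longrightarrow> has_chain Q k"
  unfolding has_chain_def by blast

lemma distinct_if_sorted_st_less: "sorted_wrt st_less ps \<Longrightarrow> distinct ps"
  by (induction ps) (auto simp: st_less_def)

lemma has_chain_if_le_Max:
  assumes "finite P" and "k \<le> Max {length ps | ps. sorted_wrt st_less ps \<and> set ps \<subseteq> P}"
  shows "has_chain P k"
proof -
  let ?L = "{length ps | ps. sorted_wrt st_less ps \<and> set ps \<subseteq> P}"
  have "length ps \<le> card P" if "sorted_wrt st_less ps" and "set ps \<subseteq> P" for ps
    using distinct_card[OF distinct_if_sorted_st_less[OF that(1)]] card_mono[OF assms(1) that(2)]
    by simp
  then have "finite ?L"
    by (auto intro: finite_subset[of _ "{..card P}"])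
  moreover have "?L \<noteq> {}"
    by (intro ex_in_conv[THEN iffD1] exI[of _ 0] CollectI exI[of _ "[]"]) simp
  ultimately have "Max ?L \<in> ?L"
    by (rule Max_in)
  then obtain ps where "length ps = Max ?L" "sorted_wrt st_less ps" "set ps \<subseteq> P"
    by auto
  then show ?thesis
    unfolding has_chain_def using assms(2)
    by (intro exI[of _ "take k ps"]) (auto dest: in_set_takeD)
qed

lemma has_chain_Hpass:
  assumes "finite (P \<inter> brick y x 0 t)" and "k \<le> Hpass P y x t"
  shows "has_chain (P \<inter> brick y x 0 t) k"
proof -
  have "{(\<eta>, s). sp_less y \<eta> \<and> \<eta> \<le> x \<and> 0 < s \<and> s \<le> t} = brick y x 0 t"
    unfolding brick_def sp_less_def less_eq_vec_def by auto
  then show ?thesis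
    using assms by (intro has_chain_if_le_Max) (simp_all add: Hpass_def)
qed

lemma cell_indices_mono_index_seqs:
  assumes h: "h > 0" and \<tau>: "\<tau> > 0" and len: "length ps = k" and sorted: "sorted_wrt st_less ps"
    and ps: "set ps \<subseteq> st_cube a (real k * h) (real k * \<tau>)"
  shows "map (cell_index a h \<tau>) ps \<in> mono_index_seqs k"
  unfolding mono_index_seqs_def sorted_index_lists_def
proof (intro allI CollectI conjI)
  fix r
  show "length (map (\<lambda>c. c r) (map (cell_index a h \<tau>) ps)) = k"
    by (simp add: len)
  show "set (map (\<lambda>c. c r) (map (cell_index a h \<tau>) ps)) \<subseteq> {..<k}"
    using ps by (auto intro!: cell_index_less[OF h \<tau>])
  have "sorted_wrt (\<lambda>p q. cell_index a h \<tau> p r \<le> cell_index a h \<tau> q r) ps"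
    using sorted by (rule sorted_wrt_mono_rel[rotated]) (rule cell_index_mono[OF h \<tau>])
  then show "sorted (map (\<lambda>c. c r) (map (cell_index a h \<tau>) ps))"
    by (simp add: sorted_wrt_map)
qed

lemma chain_cell_counts:
  fixes a :: "real ^ 'd::finite"
  assumes chain: "has_chain (P \<inter> st_cube a s t) k" and "s > 0" and "t > 0" and "k > 0"
    and fin: "\<And>c. finite (P \<inter> cell a (s / k) (t / k) c)"
  shows "\<exists>cs\<in>mono_index_seqs k. \<forall>c\<in>set cs. count_list cs c \<le> card (P \<inter> cell a (s / k) (t / k) c)"
proof -
  define h \<tau> where "h = s / k" and "\<tau> = t / k"
  have h: "h > 0" and \<tau>: "\<tau> > 0"
    using assms by (simp_all add: h_def \<tau>_def)
  obtain ps where len: "length ps = k" and sorted: "sorted_wrt st_less ps"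
    and ps: "set ps \<subseteq> P \<inter> st_cube a (real k * h) (real k * \<tau>)"
    using chain \<open>k > 0\<close> by (auto simp: has_chain_def h_def \<tau>_def)
  define cs where "cs = map (cell_index a h \<tau>) ps"
  have "cs \<in> mono_index_seqs k"
    unfolding cs_def using ps by (intro cell_indices_mono_index_seqs[OF h \<tau> len sorted]) auto
  moreover have "count_list cs c \<le> card (P \<inter> cell a h \<tau> c)" for c
  proof -
    let ?Q = "filter (\<lambda>p. c = cell_index a h \<tau> p) ps"
    have "count_list cs c = length ?Q"
      by (simp add: cs_def count_list_eq_length_filter filter_map o_def)
    also have "\<dots> = card (set ?Q)"
      by (intro distinct_card[symmetric] distinct_filter distinct_if_sorted_st_less[OF sorted])
    also have "\<dots> \<le> card (P \<inter> cell a h \<tau> c)"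
    proof (rule card_mono)
      show "finite (P \<inter> cell a h \<tau> c)"
        using fin by (simp add: h_def \<tau>_def)
      show "set ?Q \<subseteq> P \<inter> cell a h \<tau> c"
      proof
        fix p assume "p \<in> set ?Q"
        then have "p \<in> P" and "p \<in> st_cube a (real k * h) (real k * \<tau>)" and "c = cell_index a h \<tau> p"
          using ps by auto
        then show "p \<in> P \<inter> cell a h \<tau> c"
          using mem_cell_cell_index[OF h \<tau>, of a p] by (auto simp: st_cube_def brick_def)
      qed
    qed
    finally show ?thesis .
  qed
  ultimately show ?thesis
    unfolding h_def \<tau>_def by blast
qed

lemma poisson_cell_occupancy:
  assumes pp: "poisson_process M Xi" and C: "\<And>c. admissible_region (C c)"
    and disj: "disjoint_family C" and v: "\<And>c. measure lborel (C c) \<le> v"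
  shows "outer_measure_le M {\<omega>\<in>space M. \<forall>c\<in>set cs. count_list cs c \<le> card (Xi \<omega> \<inter> C c)} (v ^ length cs)"
proof (rule outer_measure_leI)
  show "{\<omega>\<in>space M. \<forall>c\<in>set cs. count_list cs c \<le> card (Xi \<omega> \<inter> C c)} \<in> sets M"
    using poisson_process_count_ge(1)[OF pp C] by (intro sets.sets_Collect_finite_All) auto
  have "measure M {\<omega>\<in>space M. \<forall>c\<in>set cs. count_list cs c \<le> card (Xi \<omega> \<inter> C c)}
      = (\<Prod>c\<in>set cs. measure M {\<omega>\<in>space M. count_list cs c \<le> card (Xi \<omega> \<inter> C c)})"
    using disj by (intro poisson_process_count_ge_indep[OF pp] C) (auto intro: disjoint_family_on_mono)
  also have "\<dots> \<le> (\<Prod>c\<in>set cs. v ^ count_list cs c)"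
  proof (rule prod_mono)
    fix c
    have "measure M {\<omega>\<in>space M. count_list cs c \<le> card (Xi \<omega> \<inter> C c)} \<le> measure lborel (C c) ^ count_list cs c"
      by (rule poisson_process_count_ge(2)[OF pp C])
    also have "\<dots> \<le> v ^ count_list cs c"
      by (intro power_mono v measure_nonneg)
    finally show "0 \<le> measure M {\<omega>\<in>space M. count_list cs c \<le> card (Xi \<omega> \<inter> C c)} \<and>
        measure M {\<omega>\<in>space M. count_list cs c \<le> card (Xi \<omega> \<inter> C c)} \<le> v ^ count_list cs c"
      by simp
  qed
  also have "\<dots> = v ^ length cs"
    by (simp add: power_sum[symmetric] sum_count_set)
  finally show "measure M {\<omega>\<in>space M. \<forall>c\<in>set cs. count_list cs c \<le> card (Xi \<omega> \<inter> C c)} \<le> v ^ length cs" .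
qed simp

lemma chain_in_cube_prob:
  fixes Xi :: "'w \<Rightarrow> ((real ^ 'd::finite) \<times> real) set"
  assumes pp: "poisson_process M Xi" and "s > 0" and "t > 0" and "k > 0"
  shows "outer_measure_le M {\<omega>\<in>space M. has_chain (Xi \<omega> \<inter> st_cube a s t) k}
           ((4 ^ (CARD('d) + 1) * s ^ CARD('d) * t / real k ^ (CARD('d) + 1)) ^ k)"
proof -
  interpret prob_space M
    using pp by (rule poisson_process_prob_space)
  define h \<tau> where "h = s / k" and "\<tau> = t / k"
  have h: "h > 0" and \<tau>: "\<tau> > 0"
    using assms by (simp_all add: h_def \<tau>_def)
  define occupied where "occupied cs =
    {\<omega>\<in>space M. \<forall>c\<in>set cs. count_list cs c \<le> card (Xi \<omega> \<inter> cell a h \<tau> c)}" for cs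
  have subset: "{\<omega>\<in>space M. has_chain (Xi \<omega> \<inter> st_cube a s t) k} \<subseteq> (\<Union>cs\<in>mono_index_seqs k. occupied cs)"
  proof
    fix \<omega> assume "\<omega> \<in> {\<omega>\<in>space M. has_chain (Xi \<omega> \<inter> st_cube a s t) k}"
    then have \<omega>: "\<omega> \<in> space M" and chain: "has_chain (Xi \<omega> \<inter> st_cube a s t) k"
      by auto
    have "finite (Xi \<omega> \<inter> cell a (s / k) (t / k) c)" for c
      by (intro poisson_process_finite[OF pp _ \<omega>] admissible_region_cell) (use \<open>t > 0\<close> in simp)
    then obtain cs where "cs \<in> mono_index_seqs k"
      and "\<forall>c\<in>set cs. count_list cs c \<le> card (Xi \<omega> \<inter> cell a h \<tau> c)"
      using chain_cell_counts[OF chain assms(2-4)] unfolding h_def \<tau>_def by blast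
    then show "\<omega> \<in> (\<Union>cs\<in>mono_index_seqs k. occupied cs)"
      using \<omega> by (auto simp: occupied_def)
  qed
  moreover have "outer_measure_le M (occupied cs) ((h ^ CARD('d) * \<tau>) ^ length cs)" for cs
    unfolding occupied_def using h \<tau>
    by (intro poisson_cell_occupancy[OF pp] admissible_region_cell disjoint_family_cell measure_cell_le) auto
  then have "outer_measure_le M (occupied cs) ((h ^ CARD('d) * \<tau>) ^ k)" if "cs \<in> mono_index_seqs k" for cs
    using length_mono_index_seqs[OF that] by metis
  then have UN_bound: "outer_measure_le M (\<Union>cs\<in>mono_index_seqs k. occupied cs)
      (\<Sum>cs\<in>(mono_index_seqs k :: ('d option \<Rightarrow> nat) list set). (h ^ CARD('d) * \<tau>) ^ k)"
    by (intro outer_measure_le_finite_UN finite_mono_index_seqs)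
  moreover have sum_le: "(\<Sum>cs\<in>(mono_index_seqs k :: ('d option \<Rightarrow> nat) list set). (h ^ CARD('d) * \<tau>) ^ k)
      \<le> 4 ^ (k * (CARD('d) + 1)) * (h ^ CARD('d) * \<tau>) ^ k"
    using card_mono_index_seqs_le[where 'r = "'d option", of k] h \<tau>
    by (simp add: card_UNIV_option mult_right_mono flip: of_nat_power)
  moreover have eq: "4 ^ (k * (CARD('d) + 1)) * (h ^ CARD('d) * \<tau>) ^ k
      = (4 ^ (CARD('d) + 1) * s ^ CARD('d) * t / real k ^ (CARD('d) + 1)) ^ k"
  proof -
    have "(4 :: real) ^ (k * (CARD('d) + 1)) = (4 ^ (CARD('d) + 1)) ^ k"
      by (metis power_mult mult.commute)
    moreover have "4 ^ (CARD('d) + 1) * (h ^ CARD('d) * \<tau>) = 4 ^ (CARD('d) + 1) * s ^ CARD('d) * t / real k ^ (CARD('d) + 1)"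
      by (simp add: h_def \<tau>_def power_divide mult_ac)
    ultimately show ?thesis
      by (metis power_mult_distrib)
  qed
  ultimately show ?thesis
    using outer_measure_le_mono[OF UN_bound subset] by simp
qed

lemma chain_in_cube_exp_bound:
  fixes Xi :: "'w \<Rightarrow> ((real ^ 'd::finite) \<times> real) set" and n \<beta> q :: real
  assumes pp: "poisson_process M Xi" and "t > 0" and "\<beta> > 0" and "n > 0" and "0 < q" and "q \<le> 1"
    and ratio: "4 ^ (CARD('d) + 1) * t / \<beta> ^ (CARD('d) + 1) * ((n + 2) / n) ^ CARD('d) \<le> q"
  defines "\<gamma> \<equiv> real CARD('d) / (real CARD('d) + 1)"
  shows "outer_measure_le M {\<omega>\<in>space M. has_chain (Xi \<omega> \<inter> st_cube a (n + 2) t) (nat \<lceil>\<beta> * n powr \<gamma>\<rceil>)}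
           (q powr (\<beta> * n powr \<gamma>))"
proof -
  let ?D = "CARD('d)"
  define k where "k = nat \<lceil>\<beta> * n powr \<gamma>\<rceil>"
  have k: "\<beta> * n powr \<gamma> \<le> real k" and "k > 0"
    using assms by (auto simp: k_def)
  have "(n powr \<gamma>) ^ (?D + 1) = (n powr \<gamma>) powr real (?D + 1)"
    using \<open>n > 0\<close> by (intro powr_realpow[symmetric]) simp
  also have "\<dots> = n powr (\<gamma> * (real ?D + 1))"
    by (simp add: powr_powr add.commute)
  also have "\<gamma> * (real ?D + 1) = real ?D"
    by (simp add: \<gamma>_def)
  finally have "(\<beta> * n powr \<gamma>) ^ (?D + 1) = \<beta> ^ (?D + 1) * n ^ ?D"
    using \<open>n > 0\<close> by (simp only: power_mult_distrib powr_realpow)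
  then have k_pow: "\<beta> ^ (?D + 1) * n ^ ?D \<le> real k ^ (?D + 1)"
    using k assms by (metis power_mono mult_nonneg_nonneg less_imp_le powr_ge_zero)
  have "4 ^ (?D + 1) * (n + 2) ^ ?D * t / real k ^ (?D + 1)
      \<le> 4 ^ (?D + 1) * (n + 2) ^ ?D * t / (\<beta> ^ (?D + 1) * n ^ ?D)"
    using k_pow assms \<open>k > 0\<close> by (intro divide_left_mono mult_pos_pos zero_less_power) auto
  also have "\<dots> = 4 ^ (?D + 1) * t / \<beta> ^ (?D + 1) * ((n + 2) / n) ^ ?D"
    by (simp add: power_divide)
  finally have "(4 ^ (?D + 1) * (n + 2) ^ ?D * t / real k ^ (?D + 1)) ^ k \<le> q ^ k"
    using ratio assms by (intro power_mono) auto
  also have "\<dots> \<le> q powr (\<beta> * n powr \<gamma>)"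
    using k assms by (simp add: powr_realpow[symmetric] powr_mono')
  finally have bound: "(4 ^ (?D + 1) * (n + 2) ^ ?D * t / real k ^ (?D + 1)) ^ k \<le> q powr (\<beta> * n powr \<gamma>)" .
  show ?thesis
    unfolding k_def[symmetric]
    by (rule outer_measure_le_mono[OF chain_in_cube_prob[OF pp _ \<open>t > 0\<close> \<open>k > 0\<close>] subset_refl bound])
      (use \<open>n > 0\<close> in simp)
qed

section \<open>Summing over boxes\<close>

lemma component_le_sup_norm: "\<bar>v $ i\<bar> \<le> sup_norm v"
  unfolding sup_norm_def by (rule Max_ge) auto

lemma sup_norm_nonneg: "0 \<le> sup_norm v"
  using component_le_sup_norm[of v undefined] by linarith

definition int_points :: "real \<Rightarrow> (real ^ 'd::finite) set" where
  "int_points r = (\<lambda>z. \<chi> i. of_int (z i)) ` (UNIV \<rightarrow>\<^sub>E {-\<lfloor>r\<rfloor>..\<lfloor>r\<rfloor>})"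

lemma finite_int_points: "finite (int_points r)"
  unfolding int_points_def by (intro finite_imageI finite_PiE) auto

lemma card_int_points_le:
  assumes "r \<ge> 0"
  shows "real (card (int_points r :: (real ^ 'd::finite) set)) \<le> (2 * r + 1) ^ CARD('d)"
proof -
  have "card (int_points r :: (real ^ 'd) set) \<le> card (UNIV \<rightarrow>\<^sub>E {-\<lfloor>r\<rfloor>..\<lfloor>r\<rfloor>} :: ('d \<Rightarrow> int) set)"
    unfolding int_points_def by (intro card_image_le finite_PiE) auto
  also have "\<dots> = nat (2 * \<lfloor>r\<rfloor> + 1) ^ CARD('d)"
    by (simp add: card_PiE)
  finally have "real (card (int_points r :: (real ^ 'd) set)) \<le> real (nat (2 * \<lfloor>r\<rfloor> + 1)) ^ CARD('d)"
    by (metis of_nat_le_iff of_nat_power)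
  also have "\<dots> \<le> (2 * r + 1) ^ CARD('d)"
    using assms by (intro power_mono) linarith+
  finally show ?thesis .
qed

lemma floor_mem_int_points:
  assumes "sup_norm y \<le> r - 1"
  shows "(\<chi> i. of_int \<lfloor>y $ i\<rfloor>) \<in> int_points r"
  unfolding int_points_def
proof (rule image_eqI)
  have "\<lfloor>y $ i\<rfloor> \<in> {-\<lfloor>r\<rfloor>..\<lfloor>r\<rfloor>}" for i
  proof -
    have "\<bar>y $ i\<bar> \<le> r - 1"
      using component_le_sup_norm assms by (rule order_trans)
    then show ?thesis
      by (simp add: abs_le_iff le_floor_iff floor_mono) linarith
  qed
  then show "(\<lambda>i. \<lfloor>y $ i\<rfloor>) \<in> UNIV \<rightarrow>\<^sub>E {-\<lfloor>r\<rfloor>..\<lfloor>r\<rfloor>}"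
    by auto
qed simp

lemma brick_subset_st_cube:
  assumes "sup_norm (x - y) < real n + 1"
  shows "brick y x 0 t \<subseteq> st_cube (\<chi> i. of_int \<lfloor>y $ i\<rfloor>) (real n + 2) t"
proof
  fix p assume p: "p \<in> brick y x 0 t"
  have "x $ i - y $ i < real n + 1" for i
    using component_le_sup_norm[of "x - y" i] assms by simp
  then show "p \<in> st_cube (\<chi> i. of_int \<lfloor>y $ i\<rfloor>) (real n + 2) t"
    using p unfolding st_cube_def brick_def
    by (auto intro: le_less_trans[OF of_int_floor_le]) (smt (verit) real_of_int_floor_add_one_gt)
qed

lemma chain_of_large_passage:
  assumes "finite (P \<inter> brick y x 0 t)" and "\<beta> \<ge> 0" and "\<gamma> \<ge> 0"
    and H: "\<beta> * sup_norm (x - y) powr \<gamma> \<le> real (Hpass P y x t)"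
  defines "n \<equiv> nat \<lfloor>sup_norm (x - y)\<rfloor>"
  shows "has_chain (P \<inter> st_cube (\<chi> i. of_int \<lfloor>y $ i\<rfloor>) (real n + 2) t) (nat \<lceil>\<beta> * real n powr \<gamma>\<rceil>)"
proof -
  have n: "real n \<le> sup_norm (x - y)" "sup_norm (x - y) < real n + 1"
    using sup_norm_nonneg[of "x - y"] by (simp_all add: n_def)
  then have "\<beta> * real n powr \<gamma> \<le> real (Hpass P y x t)"
    using H assms(2,3) by (smt (verit) mult_left_mono powr_mono2 of_nat_0_le_iff)
  then have "nat \<lceil>\<beta> * real n powr \<gamma>\<rceil> \<le> Hpass P y x t"
    by (simp add: nat_le_iff ceiling_le_iff)
  then have "has_chain (P \<inter> brick y x 0 t) (nat \<lceil>\<beta> * real n powr \<gamma>\<rceil>)"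
    using assms(1) by (rule has_chain_Hpass[rotated])
  then show ?thesis
    by (rule has_chain_mono) (use brick_subset_st_cube[OF n(2), of t] in blast)
qed

lemma summable_poly_times_exp_neg_powr:
  fixes a b c \<gamma> :: real
  assumes "a > 0" and "c > 0" and "\<gamma> > 0"
  shows "summable (\<lambda>n::nat. (a * real n + b) ^ D * exp (- c * real n powr \<gamma>))"
proof (rule summable_comparison_test_bigo)
  show "summable (\<lambda>n. norm (1 / real n ^ 2))"
    using inverse_power_summable[of 2, where 'a = real] by (simp add: inverse_eq_divide)
  show "(\<lambda>n. (a * real n + b) ^ D * exp (- c * real n powr \<gamma>)) \<in> O(\<lambda>n. 1 / real n ^ 2)"
    by (insert assms) real_asymp
qed

lemma four_pow_lt_if_gt_exp2:
  fixes t \<beta> :: real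
  assumes "t > 0" and "\<beta> > exp 2 * t powr (1 / (real m + 1))"
  shows "\<beta> > 0" and "4 ^ (m + 1) * t / \<beta> ^ (m + 1) < 1"
proof -
  define r where "r = t powr (1 / (real m + 1))"
  have r: "r > 0"
    using assms by (simp add: r_def)
  have "r ^ (m + 1) = r powr real (m + 1)"
    using r by (rule powr_realpow[symmetric])
  also have "\<dots> = t powr (1 / (real m + 1) * real (m + 1))"
    unfolding r_def by (rule powr_powr)
  finally have r_pow: "r ^ (m + 1) = t"
    using assms by (simp add: add.commute)
  have "4 < exp (2 :: real)"
    using exp_lower_Taylor_quadratic[of 2] by simp
  then have "4 * r < exp 2 * r"
    using r by simp
  then have four_r: "4 * r < \<beta>"
    using assms(2) by (simp add: r_def)
  then show "\<beta> > 0"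
    using r by linarith
  have "(4 * r) ^ (m + 1) < \<beta> ^ (m + 1)"
    using four_r r by (intro power_strict_mono) auto
  then have "4 ^ (m + 1) * t < \<beta> ^ (m + 1)"
    by (simp only: power_mult_distrib r_pow)
  then show "4 ^ (m + 1) * t / \<beta> ^ (m + 1) < 1"
    using \<open>\<beta> > 0\<close> by simp
qed

lemma eventually_ratio_le:
  fixes q q' :: real
  assumes "q < q'" and "q > 0"
  shows "\<forall>\<^sub>F n in sequentially. q * ((real n + 2) / real n) ^ D \<le> q'"
proof -
  have "((\<lambda>n. q * ((real n + 2) / real n) ^ D) \<longlongrightarrow> q) sequentially"
    by real_asymp
  from order_tendstoD(2)[OF this assms(1)] show ?thesis
    by (rule eventually_mono) simp
qed

lemma level_event_prob:
  fixes Xi :: "'w \<Rightarrow> ((real ^ 'd::finite) \<times> real) set" and \<alpha> \<beta> q :: real and n :: nat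
  assumes pp: "poisson_process M Xi" and "t > 0" and "\<alpha> > 0" and "\<beta> > 0" and "n > 0"
    and "0 < q" and "q \<le> 1"
    and ratio: "4 ^ (CARD('d) + 1) * t / \<beta> ^ (CARD('d) + 1) * ((real n + 2) / real n) ^ CARD('d) \<le> q"
  defines "\<gamma> \<equiv> real CARD('d) / (real CARD('d) + 1)"
  shows "outer_measure_le M
     {\<omega>\<in>space M. \<exists>a\<in>int_points ((real n + 1) / \<alpha> + 1).
        has_chain (Xi \<omega> \<inter> st_cube a (real n + 2) t) (nat \<lceil>\<beta> * real n powr \<gamma>\<rceil>)}
     ((2 / \<alpha> * real n + (2 / \<alpha> + 3)) ^ CARD('d) * q powr (\<beta> * real n powr \<gamma>))"
proof -
  interpret prob_space M
    using pp by (rule poisson_process_prob_space)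
  let ?r = "(real n + 1) / \<alpha> + 1"
  let ?chain = "\<lambda>a. {\<omega>\<in>space M. has_chain (Xi \<omega> \<inter> st_cube a (real n + 2) t) (nat \<lceil>\<beta> * real n powr \<gamma>\<rceil>)}"
  have UN_bound: "outer_measure_le M (\<Union>a\<in>int_points ?r. ?chain a) (\<Sum>a\<in>(int_points ?r :: (real ^ 'd) set). q powr (\<beta> * real n powr \<gamma>))"
    unfolding \<gamma>_def
    by (rule outer_measure_le_finite_UN[OF finite_int_points])
      (use chain_in_cube_exp_bound[OF pp \<open>t > 0\<close> \<open>\<beta> > 0\<close> _ \<open>0 < q\<close> \<open>q \<le> 1\<close> ratio] \<open>n > 0\<close> in auto)
  have sum_le: "(\<Sum>a\<in>(int_points ?r :: (real ^ 'd) set). q powr (\<beta> * real n powr \<gamma>))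
      \<le> (2 / \<alpha> * real n + (2 / \<alpha> + 3)) ^ CARD('d) * q powr (\<beta> * real n powr \<gamma>)"
  proof -
    have "real (card (int_points ?r :: (real ^ 'd) set)) \<le> (2 * ?r + 1) ^ CARD('d)"
      using \<open>\<alpha> > 0\<close> by (intro card_int_points_le) simp
    also have "2 * ?r + 1 = 2 / \<alpha> * real n + (2 / \<alpha> + 3)"
      using \<open>\<alpha> > 0\<close> by (simp add: field_simps)
    finally show ?thesis
      by (simp add: mult_right_mono)
  qed
  show ?thesis
    by (rule outer_measure_le_mono[OF UN_bound _ sum_le]) auto
qed

lemma large_passage_subset_levels:
  fixes Xi :: "'w \<Rightarrow> ((real ^ 'd::finite) \<times> real) set" and \<alpha> \<beta> \<gamma> \<theta> :: real
  assumes pp: "poisson_process M Xi" and "\<alpha> > 0" and "\<beta> \<ge> 0" and "\<gamma> \<ge> 0"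
  shows "{\<omega>\<in>space M. \<exists>y x :: real ^ 'd. sp_less y x \<and> sup_norm y \<ge> \<theta> \<and>
            sup_norm (x - y) \<ge> \<alpha> * sup_norm y \<and>
            real (Hpass (Xi \<omega>) y x t) \<ge> \<beta> * sup_norm (x - y) powr \<gamma>}
    \<subseteq> (\<Union>n. {\<omega>\<in>space M. \<alpha> * \<theta> < real n + 1 \<and> (\<exists>a\<in>int_points ((real n + 1) / \<alpha> + 1).
            has_chain (Xi \<omega> \<inter> st_cube a (real n + 2) t) (nat \<lceil>\<beta> * real n powr \<gamma>\<rceil>))})"
    (is "_ \<subseteq> ?levels")
proof
  fix \<omega> assume "\<omega> \<in> {\<omega>\<in>space M. \<exists>y x :: real ^ 'd. sp_less y x \<and> sup_norm y \<ge> \<theta> \<and>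
            sup_norm (x - y) \<ge> \<alpha> * sup_norm y \<and>
            real (Hpass (Xi \<omega>) y x t) \<ge> \<beta> * sup_norm (x - y) powr \<gamma>}"
  then obtain y x :: "real ^ 'd" where \<omega>: "\<omega> \<in> space M" and "\<theta> \<le> sup_norm y"
    and y: "\<alpha> * sup_norm y \<le> sup_norm (x - y)"
    and H: "\<beta> * sup_norm (x - y) powr \<gamma> \<le> real (Hpass (Xi \<omega>) y x t)"
    by blast
  define n where "n = nat \<lfloor>sup_norm (x - y)\<rfloor>"
  have n: "sup_norm (x - y) < real n + 1"
    using sup_norm_nonneg[of "x - y"] by (simp add: n_def)
  have "\<alpha> * \<theta> < real n + 1"
    using \<open>\<theta> \<le> sup_norm y\<close> \<open>\<alpha> > 0\<close> y n by (smt (verit) mult_left_mono)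
  moreover have "(\<chi> i. of_int \<lfloor>y $ i\<rfloor>) \<in> int_points ((real n + 1) / \<alpha> + 1)"
    using y n \<open>\<alpha> > 0\<close> by (intro floor_mem_int_points) (simp add: field_simps)
  moreover have "has_chain (Xi \<omega> \<inter> st_cube (\<chi> i. of_int \<lfloor>y $ i\<rfloor>) (real n + 2) t) (nat \<lceil>\<beta> * real n powr \<gamma>\<rceil>)"
    unfolding n_def using assms(3,4) H
    by (intro chain_of_large_passage poisson_process_finite[OF pp admissible_region_brick \<omega>]) auto
  ultimately show "\<omega> \<in> ?levels"
    using \<omega> by blast
qed

lemma level_event_exp_bound:
  fixes Xi :: "'w \<Rightarrow> ((real ^ 'd::finite) \<times> real) set" and t \<alpha> \<beta> q \<theta> :: real and N n :: nat
  assumes pp: "poisson_process M Xi" and "t > 0" and "\<alpha> > 0" and "\<beta> > 0" and "0 < q" and "q < 1"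
    and ratio: "\<And>n. N \<le> n \<Longrightarrow>
      4 ^ (CARD('d) + 1) * t / \<beta> ^ (CARD('d) + 1) * ((real n + 2) / real n) ^ CARD('d) \<le> q"
    and \<theta>: "real N + 2 \<le> \<alpha> * \<theta>"
  defines "\<gamma> \<equiv> real CARD('d) / (real CARD('d) + 1)" and "c \<equiv> - \<beta> * ln q"
  shows "outer_measure_le M
      {\<omega>\<in>space M. \<alpha> * \<theta> < real n + 1 \<and> (\<exists>a\<in>int_points ((real n + 1) / \<alpha> + 1).
         has_chain (Xi \<omega> \<inter> st_cube a (real n + 2) t) (nat \<lceil>\<beta> * real n powr \<gamma>\<rceil>))}
      ((2 / \<alpha> * real n + (2 / \<alpha> + 3)) ^ CARD('d) * exp (- (c / 2) * real n powr \<gamma>)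
        * exp (- (c / 2 * (\<alpha> / 2) powr \<gamma>) * \<theta> powr \<gamma>))"
proof (cases "\<alpha> * \<theta> < real n + 1")
  case False
  then show ?thesis
    using \<open>\<alpha> > 0\<close> by (simp add: outer_measure_le_empty add_nonneg_pos)
next
  case True
  let ?base = "(2 / \<alpha> * real n + (2 / \<alpha> + 3)) ^ CARD('d)"
  define X where "X = real n powr \<gamma>"
  have "N \<le> n" and "n > 0" and "0 < \<alpha> * \<theta>"
    using True \<theta> by linarith+
  then have "\<theta> \<ge> 0"
    using \<open>\<alpha> > 0\<close> by (simp add: zero_less_mult_iff)
  have "c > 0"
    using assms by (simp add: c_def mult_less_0_iff)
  have "(\<alpha> / 2) powr \<gamma> * \<theta> powr \<gamma> = (\<alpha> * \<theta> / 2) powr \<gamma>"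
    using \<open>\<alpha> > 0\<close> \<open>\<theta> \<ge> 0\<close> powr_mult[of "\<alpha> / 2" \<theta> \<gamma>] by simp
  also have "\<dots> \<le> X"
    unfolding X_def using True \<theta> \<open>\<theta> \<ge> 0\<close> by (intro powr_mono2) (auto simp: \<gamma>_def)
  finally have exponent: "c / 2 * (\<alpha> / 2) powr \<gamma> * \<theta> powr \<gamma> \<le> c / 2 * X"
    using \<open>c > 0\<close> by (simp add: mult.assoc)
  have "q powr (\<beta> * X) = exp (- (c / 2) * X) * exp (- (c / 2) * X)"
    using \<open>0 < q\<close> by (simp add: powr_def c_def mult_ac flip: exp_add)
  also have "\<dots> \<le> exp (- (c / 2) * X) * exp (- (c / 2 * (\<alpha> / 2) powr \<gamma>) * \<theta> powr \<gamma>)"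
    using exponent by simp
  finally have "?base * q powr (\<beta> * X)
      \<le> ?base * exp (- (c / 2) * X) * exp (- (c / 2 * (\<alpha> / 2) powr \<gamma>) * \<theta> powr \<gamma>)"
    using \<open>\<alpha> > 0\<close> by (simp add: mult.assoc mult_left_mono)
  moreover have "outer_measure_le M
      {\<omega>\<in>space M. \<exists>a\<in>int_points ((real n + 1) / \<alpha> + 1).
         has_chain (Xi \<omega> \<inter> st_cube a (real n + 2) t) (nat \<lceil>\<beta> * real n powr \<gamma>\<rceil>)}
      (?base * q powr (\<beta> * X))"
    unfolding X_def \<gamma>_def
    using level_event_prob[OF pp \<open>t > 0\<close> \<open>\<alpha> > 0\<close> \<open>\<beta> > 0\<close> \<open>n > 0\<close> \<open>0 < q\<close> _ ratio[OF \<open>N \<le> n\<close>]] \<open>q < 1\<close>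
    by simp
  ultimately show ?thesis
    unfolding X_def by (elim outer_measure_le_mono) auto
qed

lemma large_passage_prob:
  fixes Xi :: "'w \<Rightarrow> ((real ^ 'd::finite) \<times> real) set" and t \<alpha> \<beta> q :: real and N :: nat
  assumes pp: "poisson_process M Xi" and "t > 0" and "\<alpha> > 0" and "\<beta> > 0" and "0 < q" and "q < 1"
    and ratio: "\<And>n. N \<le> n \<Longrightarrow>
      4 ^ (CARD('d) + 1) * t / \<beta> ^ (CARD('d) + 1) * ((real n + 2) / real n) ^ CARD('d) \<le> q"
  defines "\<gamma> \<equiv> real CARD('d) / (real CARD('d) + 1)"
  shows "\<exists>\<theta>0 C1 C2. \<theta>0 > 0 \<and> C1 > 0 \<and> C2 > 0 \<and> (\<forall>\<theta>\<ge>\<theta>0. outer_measure_le M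
     {\<omega>\<in>space M. \<exists>y x :: real ^ 'd. sp_less y x \<and> sup_norm y \<ge> \<theta> \<and> sup_norm (x - y) \<ge> \<alpha> * sup_norm y \<and>
        real (Hpass (Xi \<omega>) y x t) \<ge> \<beta> * sup_norm (x - y) powr \<gamma>}
     (C1 * exp (- C2 * \<theta> powr \<gamma>)))"
proof -
  interpret prob_space M
    using pp by (rule poisson_process_prob_space)
  define c where "c = - \<beta> * ln q"
  define b where "b n = (2 / \<alpha> * real n + (2 / \<alpha> + 3)) ^ CARD('d) * exp (- (c / 2) * real n powr \<gamma>)"
    for n :: nat
  define C2 where "C2 = c / 2 * (\<alpha> / 2) powr \<gamma>"
  have c: "c > 0"
    using assms by (simp add: c_def mult_less_0_iff)
  have \<gamma>: "\<gamma> > 0"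
    by (simp add: \<gamma>_def)
  have b_pos: "b n > 0" for n
    using \<open>\<alpha> > 0\<close> by (simp add: b_def add_nonneg_pos)
  have summable_b: "summable b"
    unfolding b_def using \<open>\<alpha> > 0\<close> c \<gamma> by (intro summable_poly_times_exp_neg_powr) auto
  show ?thesis
  proof (intro exI conjI allI impI)
    show "(real N + 2) / \<alpha> > 0" and "suminf b > 0" and "C2 > 0"
      using \<open>\<alpha> > 0\<close> c summable_b b_pos by (auto simp: C2_def intro: suminf_pos)
    fix \<theta> assume "\<theta> \<ge> (real N + 2) / \<alpha>"
    then have "real N + 2 \<le> \<alpha> * \<theta>"
      using \<open>\<alpha> > 0\<close> by (simp add: field_simps)
    then have "outer_measure_le M (\<Union>n. {\<omega>\<in>space M. \<alpha> * \<theta> < real n + 1 \<and> (\<exists>a\<in>int_points ((real n + 1) / \<alpha> + 1).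
         has_chain (Xi \<omega> \<inter> st_cube a (real n + 2) t) (nat \<lceil>\<beta> * real n powr \<gamma>\<rceil>))})
        (\<Sum>n. b n * exp (- C2 * \<theta> powr \<gamma>))"
      using level_event_exp_bound[OF pp assms(2-6) ratio] unfolding b_def C2_def c_def \<gamma>_def
      by (intro outer_measure_le_countable_UN summable_mult2 summable_b[unfolded b_def c_def \<gamma>_def]) auto
    then show "outer_measure_le M
     {\<omega>\<in>space M. \<exists>y x :: real ^ 'd. sp_less y x \<and> sup_norm y \<ge> \<theta> \<and> sup_norm (x - y) \<ge> \<alpha> * sup_norm y \<and>
        real (Hpass (Xi \<omega>) y x t) \<ge> \<beta> * sup_norm (x - y) powr \<gamma>}
     (suminf b * exp (- C2 * \<theta> powr \<gamma>))"
      by (rule outer_measure_le_mono[OF _ large_passage_subset_levels[OF pp \<open>\<alpha> > 0\<close>]])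
        (use \<gamma> \<open>\<beta> > 0\<close> in \<open>auto simp: suminf_mult2[OF summable_b]\<close>)
  qed
qed

theorem lemma7p5:
  fixes M :: "'w measure" and Xi :: "'w \<Rightarrow> ((real ^ 'd::finite) \<times> real) set"
    and t \<alpha> \<beta> :: real
  assumes "CARD('d) \<ge> 2"
    and "poisson_process M Xi"
    and "t > 0" and "0 < \<alpha>" and "\<alpha> < 1/2"
    and "\<beta> > exp 2 * t powr (1 / (real CARD('d) + 1))"
  shows "\<exists>\<theta>0 C1 C2 :: real. \<theta>0 > 0 \<and> C1 > 0 \<and> C2 > 0 \<and>
    (\<forall>\<theta>\<ge>\<theta>0. \<exists>E\<in>sets M.
       {\<omega>\<in>space M. \<exists>y x :: real ^ 'd. sp_less y x \<and> sup_norm y \<ge> \<theta> \<and>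
           sup_norm (x - y) \<ge> \<alpha> * sup_norm y \<and>
           real (Hpass (Xi \<omega>) y x t) \<ge>
             \<beta> * sup_norm (x - y) powr (real CARD('d) / (real CARD('d) + 1))} \<subseteq> E \<and>
       measure M E \<le> C1 * exp (- C2 * \<theta> powr (real CARD('d) / (real CARD('d) + 1))))"
proof -
  let ?D = "CARD('d)"
  define q where "q = 4 ^ (?D + 1) * t / \<beta> ^ (?D + 1)"
  have "\<beta> > 0" and "q < 1"
    using four_pow_lt_if_gt_exp2[OF \<open>t > 0\<close> assms(6)] by (simp_all add: q_def)
  then have "q > 0"
    using \<open>t > 0\<close> by (simp add: q_def)
  obtain N where "\<And>n. N \<le> n \<Longrightarrow> q * ((real n + 2) / real n) ^ ?D \<le> (1 + q) / 2"
    using eventually_ratio_le[of q "(1 + q) / 2" ?D] \<open>q < 1\<close> \<open>q > 0\<close>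
    by (auto simp: eventually_sequentially)
  then have ratio: "\<And>n. N \<le> n \<Longrightarrow> 4 ^ (?D + 1) * t / \<beta> ^ (?D + 1) * ((real n + 2) / real n) ^ ?D \<le> (1 + q) / 2"
    unfolding q_def .
  have "\<exists>\<theta>0 C1 C2. \<theta>0 > 0 \<and> C1 > 0 \<and> C2 > 0 \<and> (\<forall>\<theta>\<ge>\<theta>0. outer_measure_le M
     {\<omega>\<in>space M. \<exists>y x :: real ^ 'd. sp_less y x \<and> sup_norm y \<ge> \<theta> \<and> sup_norm (x - y) \<ge> \<alpha> * sup_norm y \<and>
        real (Hpass (Xi \<omega>) y x t) \<ge> \<beta> * sup_norm (x - y) powr (real ?D / (real ?D + 1))}
     (C1 * exp (- C2 * \<theta> powr (real ?D / (real ?D + 1)))))"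
    by (rule large_passage_prob[OF assms(2,3,4) \<open>\<beta> > 0\<close> _ _ ratio]) (use \<open>q < 1\<close> \<open>q > 0\<close> in auto)
  then show ?thesis
    unfolding outer_measure_le_def .
qed

end
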